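(* Let $u,v$ be monomials with $\mu(u)\cap\mu(v)=\emptyset$ and $p_{ij}p_{ji}=1$ for all $x_i\in\mu(u)$, $x_j\in\mu(v)$. Then the following are equivalent: (i) $u\neq0$ and $v\neq0$ in $\mathfrak{B}(V)$; (ii) $uv\neq0$; (iii) $uv\notin\mathfrak{L}(V)$.
   Context: $V$ is a braided vector space of diagonal type over an algebraically closed field $F$ of characteristic $0$ with basis $x_1,\dots,x_n$, braiding $C(x_i\otimes x_j)=q_{ij}x_j\otimes x_i$, Nichols algebra $\mathfrak{B}(V)$ ($\mathbb{Z}^n$-graded, $\deg x_i=e_i$); $\chi(e_i,e_j)=q_{ij}$, $p_{ij}:=q_{ij}$, $p_{uv}:=\chi(\deg u,\deg v)$. For homogeneous $x,y$, $[x,y]:=yx-p_{yx}xy$; $\mathfrak{L}(V)$ is the linear span of all iterated brackets (any bracketing) of $x_1,\dots,x_n$. A monomial is a nonempty word in $x_1,\dots,x_n$ viewed in $\mathfrak{B}(V)$, and $\mu(u)$ is its set of letters. *)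

theory Defs
  imports Main "HOL-Combinatorics.Permutations" "HOL-Computational_Algebra.Polynomial"
begin

text \<open>Tensor algebra T(V) on letters x_0,...,x_{n-1}: elements are coefficient
functions on words (lists of letter indices).\<close>

type_synonym 'a tensor = "nat list \<Rightarrow> 'a"

definition mono :: "nat list \<Rightarrow> 'a::field tensor" where
  "mono w = (\<lambda>w'. if w' = w then 1 else 0)"

definition tmult :: "'a::field tensor \<Rightarrow> 'a tensor \<Rightarrow> 'a tensor" where
  "tmult f g = (\<lambda>w. \<Sum>k\<in>{0..length w}. f (take k w) * g (drop k w))"

text \<open>Bicharacter on degrees; a degree is represented by the list of letters.\<close>
definition chi :: "(nat \<Rightarrow> nat \<Rightarrow> 'a::field) \<Rightarrow> nat list \<Rightarrow> nat list \<Rightarrow> 'a" where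
  "chi q a b = prod_list [q i j. i \<leftarrow> a, j \<leftarrow> b]"

text \<open>Quantum symmetrizer (sum over all permutations of the braid-group action
of their Matsumoto lifts) for the diagonal braiding c(x_i \<otimes> x_j) = q_ij x_j \<otimes> x_i,
applied degree-wise.\<close>
definition qsym :: "(nat \<Rightarrow> nat \<Rightarrow> 'a::field) \<Rightarrow> 'a tensor \<Rightarrow> 'a tensor" where
  "qsym q f = (\<lambda>w'. \<Sum>\<sigma> | \<sigma> permutes {..<length w'}.
      (\<Prod>(p,p') \<in> {(p,p'). p < p' \<and> p' < length w' \<and> \<sigma> p' < \<sigma> p}.
          q (w' ! \<sigma> p) (w' ! \<sigma> p'))
      * f (map (\<lambda>p. w' ! \<sigma> p) [0..<length w']))"

text \<open>An element of T(V) is zero in the Nichols algebra B(V) = T(V)/I(V) iff it lies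
in I(V) = \<Oplus>_m ker(\<Omega>_m).\<close>
definition nichols_zero :: "(nat \<Rightarrow> nat \<Rightarrow> 'a::field) \<Rightarrow> 'a tensor \<Rightarrow> bool" where
  "nichols_zero q f \<longleftrightarrow> qsym q f = (\<lambda>_. 0)"

datatype btree = Letter nat | Br btree btree

fun letters :: "btree \<Rightarrow> nat list" where
  "letters (Letter i) = [i]"
| "letters (Br s t) = letters s @ letters t"

fun beval :: "(nat \<Rightarrow> nat \<Rightarrow> 'a::field) \<Rightarrow> btree \<Rightarrow> 'a tensor" where
  "beval q (Letter i) = mono [i]"
| "beval q (Br s t) =
     (\<lambda>w. tmult (beval q t) (beval q s) w
          - chi q (letters t) (letters s) * tmult (beval q s) (beval q t) w)"

definition in_LV :: "nat \<Rightarrow> (nat \<Rightarrow> nat \<Rightarrow> 'a::field) \<Rightarrow> 'a tensor \<Rightarrow> bool" where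
  "in_LV n q f \<longleftrightarrow> (\<exists>ts cs. length cs = length ts \<and>
      (\<forall>t\<in>set ts. \<forall>i\<in>set (letters t). i < n) \<and>
      nichols_zero q (\<lambda>w. f w - (\<Sum>k<length ts. cs ! k * beval q (ts ! k) w)))"

definition alg_closed_field :: "'a::field itself \<Rightarrow> bool" where
  "alg_closed_field _ \<longleftrightarrow> (\<forall>p :: 'a poly. degree p > 0 \<longrightarrow> (\<exists>x. poly p x = 0))"

end

theory Submission
  imports Defs
begin

(* Write \<Omega> for the quantum symmetrizer qsym. Factoring a permutation of N positions into a
   (k, N - k)-shuffle and permutations of the two blocks gives
     \<Omega>(f g)(w) = \<Sum>\<^sub>P c\<^sub>P(w) \<Omega>(f)(w|P) \<Omega>(g)(w|P\<^sup>c),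
   summed over position sets P, with c\<^sub>P(w) the braiding scalar of the shuffle. Hence ker \<Omega> is
   an ideal, and for homogeneous f, g in disjoint letters only the P carrying the letters of f
   contributes. For w = a b this gives \<Omega>(u v)(a b) = \<Omega>(u)(a) \<Omega>(v)(b), so u v \<noteq> 0 iff u \<noteq> 0
   and v \<noteq> 0. If moreover p\<^sub>i\<^sub>j p\<^sub>j\<^sub>i = 1 across the two letter sets, the surviving terms of
   \<Omega>(g f) and \<Omega>(f g) differ exactly by \<chi>(deg g, deg f), so [s, t] vanishes in B(V) whenever s
   and t live on the two letter sets; by induction every iterated bracket whose letters meet
   both sets vanishes. Since u v is homogeneous of such a degree, u v \<in> L(V) forces u v = 0. *)

lemma sorted_list_of_set_nth_less_iff:
  assumes "finite P" "i < card P" "j < card P"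
  shows "sorted_list_of_set P ! i < sorted_list_of_set P ! j \<longleftrightarrow> i < j"
  using assms
  by (metis sorted_wrt_nth_less[OF strict_sorted_list_of_set] length_sorted_list_of_set
      not_less_iff_gr_or_eq order_less_asym)

lemma sorted_list_of_set_nth_mem:
  "finite P \<Longrightarrow> i < card P \<Longrightarrow> sorted_list_of_set P ! i \<in> P"
  by (metis length_sorted_list_of_set nth_mem set_sorted_list_of_set)

lemma sorted_list_of_set_nth_eq_iff:
  "finite P \<Longrightarrow> i < card P \<Longrightarrow> j < card P
    \<Longrightarrow> sorted_list_of_set P ! i = sorted_list_of_set P ! j \<longleftrightarrow> i = j"
  by (simp add: nth_eq_iff_index_eq)

lemma sorted_list_of_set_eq_filter_upt:
  assumes "P \<subseteq> {..<n}"
  shows "sorted_list_of_set P = filter (\<lambda>i. i \<in> P) [0..<n]"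
proof -
  have "{i. i < n \<and> i \<in> P} = P"
    using assms by auto
  then show ?thesis
    using finite_subset[OF assms]
    by (subst sorted_list_of_set_unique[symmetric])
       (auto simp: sorted_wrt_filter distinct_card[symmetric])
qed

lemma nths_eq_map_sorted_list_of_set:
  assumes "P \<subseteq> {..<length w}"
  shows "nths w P = map ((!) w) (sorted_list_of_set P)"
proof -
  have "zip w [0..<length w] = map (\<lambda>i. (w ! i, i)) [0..<length w]"
    by (rule nth_equalityI) auto
  then show ?thesis
    unfolding nths_def sorted_list_of_set_eq_filter_upt[OF assms]
    by (simp add: filter_map comp_def)
qed

lemma length_nths_subset: "P \<subseteq> {..<length w} \<Longrightarrow> length (nths w P) = card P"
  by (simp add: nths_eq_map_sorted_list_of_set)

lemma nth_nths:
  "P \<subseteq> {..<length w} \<Longrightarrow> i < card P \<Longrightarrow> nths w P ! i = w ! (sorted_list_of_set P ! i)"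
  by (simp add: nths_eq_map_sorted_list_of_set)

lemma prod_list_map_nths:
  assumes "P \<subseteq> {..<length w}"
  shows "prod_list (map h (nths w P)) = (\<Prod>i\<in>P. h (w ! i))"
  using finite_subset[OF assms]
  by (simp add: nths_eq_map_sorted_list_of_set[OF assms] prod.distinct_set_conv_list[symmetric] comp_def)

lemma nths_append_suffix: "nths (a @ b) {length a..<length a + length b} = b"
proof -
  have "nths a {length a..<length a + length b} = []"
    by (auto simp: nths_def filter_empty_conv set_zip)
  then show ?thesis
    by (simp add: nths_append nths_all)
qed

section \<open>Shuffle decomposition of permutations\<close>

definition inversions :: "nat \<Rightarrow> (nat \<Rightarrow> nat) \<Rightarrow> (nat \<times> nat) set" where
  "inversions N \<sigma> = {(p, p'). p < p' \<and> p' < N \<and> \<sigma> p' < \<sigma> p}"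

definition inversion_coeff :: "(nat \<Rightarrow> nat \<Rightarrow> 'a::field) \<Rightarrow> nat list \<Rightarrow> (nat \<Rightarrow> nat) \<Rightarrow> 'a" where
  "inversion_coeff q w \<sigma> = (\<Prod>(p, p') \<in> inversions (length w) \<sigma>. q (w ! \<sigma> p) (w ! \<sigma> p'))"

lemma qsym_eq_sum_permutes:
  "qsym q f w =
    (\<Sum>\<sigma> | \<sigma> permutes {..<length w}. inversion_coeff q w \<sigma> * f (permute_list \<sigma> w))"
  unfolding qsym_def inversion_coeff_def inversions_def permute_list_def by simp

definition crossings :: "nat \<Rightarrow> nat set \<Rightarrow> (nat \<times> nat) set" where
  "crossings N P = {(i, j). i \<in> P \<and> j < N \<and> j \<notin> P \<and> j < i}"

text \<open>The scalar by which the braiding moves the letters at positions \<open>P\<close>, in their order,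
  in front of the remaining letters of \<open>w\<close>.\<close>
definition crossing_coeff :: "(nat \<Rightarrow> nat \<Rightarrow> 'a::field) \<Rightarrow> nat list \<Rightarrow> nat set \<Rightarrow> 'a" where
  "crossing_coeff q w P = (\<Prod>(i, j) \<in> crossings (length w) P. q (w ! i) (w ! j))"

definition shuffle_perm :: "nat \<Rightarrow> nat \<Rightarrow> nat set \<Rightarrow> (nat \<Rightarrow> nat) \<Rightarrow> (nat \<Rightarrow> nat) \<Rightarrow> nat \<Rightarrow> nat" where
  "shuffle_perm N k P \<alpha> \<beta> p =
    (if p < k then sorted_list_of_set P ! \<alpha> p
     else if p < N then sorted_list_of_set ({..<N} - P) ! \<beta> (p - k)
     else p)"

lemma permutes_lessThan_if_inj_on:
  fixes f :: "nat \<Rightarrow> nat"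
  assumes "inj_on f {..<n}" "\<And>x. x < n \<Longrightarrow> f x < n" "\<And>x. n \<le> x \<Longrightarrow> f x = x"
  shows "f permutes {..<n}"
proof (rule bij_imp_permutes)
  have "f ` {..<n} = {..<n}"
    by (rule endo_inj_surj) (use assms in auto)
  then show "bij_betw f {..<n} {..<n}"
    using assms(1) by (simp add: bij_betw_def)
qed (use assms in auto)

context
  fixes N k :: nat and P :: "nat set" and \<alpha> \<beta> :: "nat \<Rightarrow> nat"
  assumes P_subset: "P \<subseteq> {..<N}" and card_P: "card P = k"
    and \<alpha>: "\<alpha> permutes {..<k}" and \<beta>: "\<beta> permutes {..<N - k}"
begin

private lemma finite_P: "finite P"
  using P_subset finite_subset by blast

private lemma card_complement: "card ({..<N} - P) = N - k"
  using P_subset card_P finite_P by (simp add: card_Diff_subset)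

private lemma k_le_N: "k \<le> N"
  using card_complement card_P P_subset by (metis card_lessThan card_mono finite_lessThan)

private lemma \<alpha>_less: "p < k \<Longrightarrow> \<alpha> p < k"
  using permutes_in_image[OF \<alpha>] by simp

private lemma \<beta>_less: "p < N - k \<Longrightarrow> \<beta> p < N - k"
  using permutes_in_image[OF \<beta>] by simp

lemma shuffle_perm_first_block: "p < k \<Longrightarrow> shuffle_perm N k P \<alpha> \<beta> p \<in> P"
  unfolding shuffle_perm_def using sorted_list_of_set_nth_mem[OF finite_P] \<alpha>_less card_P by auto

lemma shuffle_perm_second_block: "k \<le> p \<Longrightarrow> p < N \<Longrightarrow> shuffle_perm N k P \<alpha> \<beta> p \<in> {..<N} - P"
  unfolding shuffle_perm_def
  using sorted_list_of_set_nth_mem[of "{..<N} - P"] \<beta>_less[of "p - k"] card_complement by auto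

lemma shuffle_perm_less_iff_first_block:
  "p < k \<Longrightarrow> p' < k \<Longrightarrow> shuffle_perm N k P \<alpha> \<beta> p' < shuffle_perm N k P \<alpha> \<beta> p \<longleftrightarrow> \<alpha> p' < \<alpha> p"
  unfolding shuffle_perm_def using sorted_list_of_set_nth_less_iff[OF finite_P] \<alpha>_less card_P by simp

lemma shuffle_perm_less_iff_second_block:
  "k \<le> p \<Longrightarrow> p < N \<Longrightarrow> k \<le> p' \<Longrightarrow> p' < N \<Longrightarrow>
    shuffle_perm N k P \<alpha> \<beta> p' < shuffle_perm N k P \<alpha> \<beta> p \<longleftrightarrow> \<beta> (p' - k) < \<beta> (p - k)"
  unfolding shuffle_perm_def
  using sorted_list_of_set_nth_less_iff[of "{..<N} - P"] \<beta>_less card_complement by simp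

lemma shuffle_perm_permutes: "shuffle_perm N k P \<alpha> \<beta> permutes {..<N}"
proof (rule permutes_lessThan_if_inj_on)
  show "inj_on (shuffle_perm N k P \<alpha> \<beta>) {..<N}"
  proof (rule inj_onI)
    fix p p' assume p: "p \<in> {..<N}" and p': "p' \<in> {..<N}"
      and eq: "shuffle_perm N k P \<alpha> \<beta> p = shuffle_perm N k P \<alpha> \<beta> p'"
    consider "p < k" "p' < k" | "k \<le> p" "k \<le> p'" | "p < k \<longleftrightarrow> \<not> p' < k"
      by linarith
    then show "p = p'"
    proof cases
      case 1
      then show ?thesis
        using eq shuffle_perm_less_iff_first_block permutes_inj[OF \<alpha>]
        by (metis injD not_less_iff_gr_or_eq)
    next
      case 2
      then have "p - k = p' - k"
        using eq p p' shuffle_perm_less_iff_second_block permutes_inj[OF \<beta>]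
        by (metis injD lessThan_iff not_less_iff_gr_or_eq)
      then show ?thesis
        using 2 by simp
    next
      case 3
      then show ?thesis
        using eq p p' shuffle_perm_first_block shuffle_perm_second_block
        by (metis Diff_iff lessThan_iff not_less)
    qed
  qed
next
  show "shuffle_perm N k P \<alpha> \<beta> p < N" if "p < N" for p
    using that shuffle_perm_first_block shuffle_perm_second_block P_subset
    by (cases "p < k") auto
next
  show "shuffle_perm N k P \<alpha> \<beta> p = p" if "N \<le> p" for p
    using that k_le_N unfolding shuffle_perm_def by simp
qed

lemma shuffle_perm_image_first_block: "shuffle_perm N k P \<alpha> \<beta> ` {..<k} = P"
proof -
  have "shuffle_perm N k P \<alpha> \<beta> ` {..<k} = (!) (sorted_list_of_set P) ` \<alpha> ` {..<k}"
    unfolding shuffle_perm_def image_image by (rule image_cong) auto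
  also have "\<dots> = (!) (sorted_list_of_set P) ` {..<length (sorted_list_of_set P)}"
    using permutes_image[OF \<alpha>] card_P by simp
  also have "\<dots> = set (sorted_list_of_set P)"
    by (auto simp: in_set_conv_nth)
  finally show ?thesis
    using finite_P by simp
qed

lemma take_permute_list_shuffle_perm:
  assumes "length w = N"
  shows "take k (permute_list (shuffle_perm N k P \<alpha> \<beta>) w) = permute_list \<alpha> (nths w P)"
  using assms P_subset k_le_N card_P \<alpha>_less
  by (intro nth_equalityI) (auto simp: length_nths_subset nth_nths permute_list_def shuffle_perm_def)

lemma drop_permute_list_shuffle_perm:
  assumes "length w = N"
  shows "drop k (permute_list (shuffle_perm N k P \<alpha> \<beta>) w) = permute_list \<beta> (nths w ({..<N} - P))"
  using assms k_le_N card_complement \<beta>_less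
  by (intro nth_equalityI) (auto simp: length_nths_subset nth_nths permute_list_def shuffle_perm_def)

lemma inversion_coeff_shuffle_perm:
  assumes w: "length w = N"
  shows "inversion_coeff q w (shuffle_perm N k P \<alpha> \<beta>) =
    crossing_coeff q w P * inversion_coeff q (nths w P) \<alpha>
      * inversion_coeff q (nths w ({..<N} - P)) \<beta>"
proof -
  define \<sigma> where "\<sigma> = shuffle_perm N k P \<alpha> \<beta>"
  define F where "F = (\<lambda>(p, p'). q (w ! \<sigma> p) (w ! \<sigma> p'))"
  define I1 where "I1 = {(p, p') \<in> inversions N \<sigma>. p' < k}"
  define I2 where "I2 = {(p, p') \<in> inversions N \<sigma>. k \<le> p}"
  define I3 where "I3 = {(p, p') \<in> inversions N \<sigma>. p < k \<and> k \<le> p'}"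
  have split: "inversions N \<sigma> = I1 \<union> I2 \<union> I3"
    unfolding I1_def I2_def I3_def inversions_def by auto
  have "finite (inversions N \<sigma>)"
    by (rule finite_subset[of _ "{..<N} \<times> {..<N}"]) (auto simp: inversions_def)
  then have "finite I1" "finite I2" "finite I3"
    unfolding split by auto
  moreover have "I1 \<inter> I2 = {}" "(I1 \<union> I2) \<inter> I3 = {}"
    unfolding I1_def I2_def I3_def inversions_def by auto
  ultimately have "inversion_coeff q w \<sigma> = prod F I1 * prod F I2 * prod F I3"
    unfolding inversion_coeff_def w F_def split by (simp add: prod.union_disjoint)
  moreover have "prod F I1 = inversion_coeff q (nths w P) \<alpha>"
  proof -
    have "I1 = inversions k \<alpha>"
      unfolding I1_def inversions_def \<sigma>_def using shuffle_perm_less_iff_first_block k_le_N by auto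
    then show ?thesis
      unfolding inversion_coeff_def F_def \<sigma>_def
      using w P_subset card_P \<alpha>_less
      by (intro prod.cong) (auto simp: inversions_def length_nths_subset nth_nths shuffle_perm_def)
  qed
  moreover have "prod F I2 = inversion_coeff q (nths w ({..<N} - P)) \<beta>"
  proof -
    have "I2 = (\<lambda>(a, b). (a + k, b + k)) ` inversions (N - k) \<beta>"
    proof (intro set_eqI iffI)
      fix x assume "x \<in> I2"
      then obtain p p' where "x = (p, p')" "k \<le> p" "p < p'" "p' < N" "\<sigma> p' < \<sigma> p"
        unfolding I2_def inversions_def by auto
      moreover have "(p - k, p' - k) \<in> inversions (N - k) \<beta>"
        using calculation shuffle_perm_less_iff_second_block[of p p']
        unfolding \<sigma>_def inversions_def by auto
      ultimately show "x \<in> (\<lambda>(a, b). (a + k, b + k)) ` inversions (N - k) \<beta>"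
        by (intro rev_image_eqI[of "(p - k, p' - k)"]) auto
    next
      fix x assume "x \<in> (\<lambda>(a, b). (a + k, b + k)) ` inversions (N - k) \<beta>"
      then show "x \<in> I2"
        unfolding I2_def \<sigma>_def inversions_def using shuffle_perm_less_iff_second_block by auto
    qed
    moreover have "inj_on (\<lambda>(a, b). (a + k, b + k)) (inversions (N - k) \<beta>)"
      by (rule inj_onI) auto
    ultimately show ?thesis
      unfolding inversion_coeff_def F_def \<sigma>_def
      using w k_le_N card_complement \<beta>_less
      by (simp add: prod.reindex, intro prod.cong)
         (auto simp: inversions_def length_nths_subset nth_nths shuffle_perm_def)
  qed
  moreover have "prod F I3 = crossing_coeff q w P"
  proof -
    have \<sigma>: "\<sigma> permutes {..<N}"
      unfolding \<sigma>_def by (rule shuffle_perm_permutes)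
    have image: "map_prod \<sigma> \<sigma> ` I3 = crossings N P"
    proof (intro set_eqI iffI)
      fix x assume "x \<in> map_prod \<sigma> \<sigma> ` I3"
      then obtain p p' where x: "x = (\<sigma> p, \<sigma> p')" "p < k" "k \<le> p'" "p' < N" "\<sigma> p' < \<sigma> p"
        unfolding I3_def inversions_def by auto
      then have "\<sigma> p \<in> P" "\<sigma> p' \<in> {..<N} - P"
        unfolding \<sigma>_def using shuffle_perm_first_block shuffle_perm_second_block by auto
      then show "x \<in> crossings N P"
        unfolding crossings_def using x by auto
    next
      fix x assume "x \<in> crossings N P"
      then obtain i j where x: "x = (i, j)" "i \<in> P" "j < N" "j \<notin> P" "j < i"
        unfolding crossings_def by auto
      obtain p where p: "p < k" "\<sigma> p = i"
        using x(2) shuffle_perm_image_first_block unfolding \<sigma>_def by (metis imageE lessThan_iff)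
      obtain p' where p': "p' < N" "\<sigma> p' = j"
        using x(3) permutes_image[OF \<sigma>] by (metis imageE lessThan_iff)
      have "k \<le> p'"
        using p' x(4) shuffle_perm_first_block unfolding \<sigma>_def by (metis not_less)
      then have "(p, p') \<in> I3"
        unfolding I3_def inversions_def using x p p' by auto
      then show "x \<in> map_prod \<sigma> \<sigma> ` I3"
        by (rule rev_image_eqI) (simp add: x p p')
    qed
    have "inj_on (map_prod \<sigma> \<sigma>) I3"
      using prod.inj_map[OF permutes_inj[OF \<sigma>] permutes_inj[OF \<sigma>]] by (rule inj_on_subset) simp
    then show ?thesis
      unfolding crossing_coeff_def w image[symmetric] F_def
      by (simp add: prod.reindex case_prod_map_prod comp_def)
  qed
  ultimately show ?thesis
    unfolding \<sigma>_def by simp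
qed

end

lemma inj_on_shuffle_perm:
  "inj_on (\<lambda>(P, \<alpha>, \<beta>). shuffle_perm N k P \<alpha> \<beta>)
    ({P. P \<subseteq> {..<N} \<and> card P = k} \<times> {\<alpha>. \<alpha> permutes {..<k}} \<times> {\<beta>. \<beta> permutes {..<N - k}})"
proof (rule inj_onI)
  fix x x'
  assume "x \<in> {P. P \<subseteq> {..<N} \<and> card P = k} \<times> {\<alpha>. \<alpha> permutes {..<k}} \<times> {\<beta>. \<beta> permutes {..<N - k}}"
    and "x' \<in> {P. P \<subseteq> {..<N} \<and> card P = k} \<times> {\<alpha>. \<alpha> permutes {..<k}} \<times> {\<beta>. \<beta> permutes {..<N - k}}"
    and eq_x: "(\<lambda>(P, \<alpha>, \<beta>). shuffle_perm N k P \<alpha> \<beta>) x = (\<lambda>(P, \<alpha>, \<beta>). shuffle_perm N k P \<alpha> \<beta>) x'"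
  then obtain P \<alpha> \<beta> P' \<alpha>' \<beta>' where x: "x = (P, \<alpha>, \<beta>)" "x' = (P', \<alpha>', \<beta>')"
    and P: "P \<subseteq> {..<N}" "card P = k" and \<alpha>: "\<alpha> permutes {..<k}" and \<beta>: "\<beta> permutes {..<N - k}"
    and P': "P' \<subseteq> {..<N}" "card P' = k" and \<alpha>': "\<alpha>' permutes {..<k}" and \<beta>': "\<beta>' permutes {..<N - k}"
    by auto
  have eq: "shuffle_perm N k P \<alpha> \<beta> = shuffle_perm N k P' \<alpha>' \<beta>'"
    using eq_x x by simp
  have "P = P' \<and> \<alpha> = \<alpha>' \<and> \<beta> = \<beta>'"
  proof (intro conjI)
    show "P = P'"
      using shuffle_perm_image_first_block[OF P \<alpha> \<beta>] shuffle_perm_image_first_block[OF P' \<alpha>' \<beta>'] eq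
      by simp
    then have "card ({..<N} - P) = N - k"
      using P by (simp add: card_Diff_subset finite_subset)
    show "\<alpha> = \<alpha>'"
    proof
      fix p show "\<alpha> p = \<alpha>' p"
      proof (cases "p < k")
        case True
        then have "sorted_list_of_set P ! \<alpha> p = sorted_list_of_set P ! \<alpha>' p"
          using fun_cong[OF eq, of p] \<open>P = P'\<close> by (simp add: shuffle_perm_def)
        then show ?thesis
          using True P permutes_in_image[OF \<alpha>] permutes_in_image[OF \<alpha>']
          by (simp add: sorted_list_of_set_nth_eq_iff finite_subset)
      next
        case False
        then show ?thesis
          using permutes_not_in[OF \<alpha>] permutes_not_in[OF \<alpha>'] by simp
      qed
    qed
    show "\<beta> = \<beta>'"
    proof
      fix p show "\<beta> p = \<beta>' p"
      proof (cases "p < N - k")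
        case True
        then have "p + k < N" "p + k - k = p"
          by auto
        then have "sorted_list_of_set ({..<N} - P) ! \<beta> p = sorted_list_of_set ({..<N} - P) ! \<beta>' p"
          using fun_cong[OF eq, of "p + k"] \<open>P = P'\<close> unfolding shuffle_perm_def by simp
        then show ?thesis
          using True \<open>card ({..<N} - P) = N - k\<close> permutes_in_image[OF \<beta>] permutes_in_image[OF \<beta>']
          by (simp add: sorted_list_of_set_nth_eq_iff)
      next
        case False
        then show ?thesis
          using permutes_not_in[OF \<beta>] permutes_not_in[OF \<beta>'] by simp
      qed
    qed
  qed
  then show "x = x'"
    using x by simp
qed

lemma bij_betw_shuffle_perm:
  assumes "k \<le> N"
  shows "bij_betw (\<lambda>(P, \<alpha>, \<beta>). shuffle_perm N k P \<alpha> \<beta>)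
    ({P. P \<subseteq> {..<N} \<and> card P = k} \<times> {\<alpha>. \<alpha> permutes {..<k}} \<times> {\<beta>. \<beta> permutes {..<N - k}})
    {\<sigma>. \<sigma> permutes {..<N}}"
    (is "bij_betw ?h ?D ?S")
proof -
  have "?h ` ?D \<subseteq> ?S"
    using shuffle_perm_permutes by auto
  moreover have "card (?h ` ?D) = card ?S"
  proof -
    have "card (?h ` ?D) = (N choose k) * fact k * fact (N - k)"
      by (simp add: card_image[OF inj_on_shuffle_perm] card_cartesian_product n_subsets
          card_permutations)
    also have "\<dots> = card ?S"
      using binomial_fact_lemma[OF assms] by (simp add: card_permutations mult_ac)
    finally show ?thesis .
  qed
  ultimately have "?h ` ?D = ?S"
    by (simp add: card_subset_eq finite_permutations)
  then show ?thesis
    by (simp add: bij_betw_def inj_on_shuffle_perm)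
qed

lemma sum_permutes_split_take_drop:
  assumes "k \<le> length w"
  shows "(\<Sum>\<sigma> | \<sigma> permutes {..<length w}. inversion_coeff q w \<sigma>
            * (f (take k (permute_list \<sigma> w)) * g (drop k (permute_list \<sigma> w))))
       = (\<Sum>P \<in> {P \<in> Pow {..<length w}. card P = k}. crossing_coeff q w P
            * qsym q f (nths w P) * qsym q g (nths w ({..<length w} - P)))"
proof -
  define N where "N = length w"
  define Q where "Q = (\<lambda>P. {..<N} - P)"
  define D where "D = {P. P \<subseteq> {..<N} \<and> card P = k} \<times> {\<alpha>. \<alpha> permutes {..<k}} \<times> {\<beta>. \<beta> permutes {..<N - k}}"
  have "(\<Sum>\<sigma> | \<sigma> permutes {..<N}. inversion_coeff q w \<sigma>
            * (f (take k (permute_list \<sigma> w)) * g (drop k (permute_list \<sigma> w))))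
      = (\<Sum>(P, \<alpha>, \<beta>) \<in> D.
          inversion_coeff q w (shuffle_perm N k P \<alpha> \<beta>)
            * (f (take k (permute_list (shuffle_perm N k P \<alpha> \<beta>) w))
             * g (drop k (permute_list (shuffle_perm N k P \<alpha> \<beta>) w))))"
    using sum.reindex_bij_betw[OF bij_betw_shuffle_perm[OF assms[folded N_def]], symmetric]
    unfolding D_def by (simp add: case_prod_unfold)
  also have "\<dots> = (\<Sum>(P, \<alpha>, \<beta>) \<in> D.
          crossing_coeff q w P
            * (inversion_coeff q (nths w P) \<alpha> * f (permute_list \<alpha> (nths w P)))
            * (inversion_coeff q (nths w (Q P)) \<beta> * g (permute_list \<beta> (nths w (Q P)))))"
    unfolding Q_def N_def D_def
    by (rule sum.cong) (auto simp: inversion_coeff_shuffle_perm take_permute_list_shuffle_perm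
        drop_permute_list_shuffle_perm mult_ac)
  also have "\<dots> = (\<Sum>P \<in> {P \<in> Pow {..<N}. card P = k}.
          crossing_coeff q w P * qsym q f (nths w P) * qsym q g (nths w (Q P)))"
  proof -
    have "length (nths w P) = k" "length (nths w (Q P)) = N - k"
      if "P \<subseteq> {..<N}" "card P = k" for P
      using that by (auto simp: Q_def N_def length_nths_subset card_Diff_subset finite_subset)
    moreover have "(\<Sum>\<alpha>\<in>A. \<Sum>\<beta>\<in>B. c * a \<alpha> * b \<beta>) = c * sum a A * sum b B"
      for c :: 'a and a b :: "(nat \<Rightarrow> nat) \<Rightarrow> 'a" and A B
      by (simp only: sum_distrib_left[of c] sum_product)
    ultimately show ?thesis
      unfolding D_def sum.cartesian_product[symmetric] qsym_eq_sum_permutes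
      by (intro sum.cong) simp_all
  qed
  finally show ?thesis
    unfolding N_def Q_def .
qed

section \<open>The quantum symmetrizer of a product\<close>

theorem qsym_tmult:
  "qsym q (tmult f g) w =
    (\<Sum>P \<in> Pow {..<length w}. crossing_coeff q w P
      * qsym q f (nths w P) * qsym q g (nths w ({..<length w} - P)))"
proof -
  define N where "N = length w"
  have "qsym q (tmult f g) w =
      (\<Sum>k\<in>{0..N}. \<Sum>\<sigma> | \<sigma> permutes {..<N}. inversion_coeff q w \<sigma>
        * (f (take k (permute_list \<sigma> w)) * g (drop k (permute_list \<sigma> w))))"
    unfolding qsym_eq_sum_permutes tmult_def N_def
    by (simp add: sum_distrib_left) (rule sum.swap)
  also have "\<dots> = (\<Sum>k\<in>{0..N}. \<Sum>P \<in> {P \<in> Pow {..<N}. card P = k}. crossing_coeff q w P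
      * qsym q f (nths w P) * qsym q g (nths w ({..<N} - P)))"
    unfolding N_def by (intro sum.cong refl sum_permutes_split_take_drop) simp
  also have "\<dots> = (\<Sum>P \<in> Pow {..<N}. crossing_coeff q w P
      * qsym q f (nths w P) * qsym q g (nths w ({..<N} - P)))"
    using card_mono[of "{..<N}"] by (intro sum.group) auto
  finally show ?thesis
    unfolding N_def .
qed

lemma qsym_diff: "qsym q (\<lambda>x. f x - g x) w = qsym q f w - qsym q g w"
  unfolding qsym_eq_sum_permutes by (simp add: algebra_simps sum_subtractf)

lemma qsym_scale: "qsym q (\<lambda>x. c * f x) w = c * qsym q f w"
  unfolding qsym_eq_sum_permutes by (simp add: algebra_simps sum_distrib_left)

lemma qsym_sum: "qsym q (\<lambda>x. \<Sum>k\<in>K. c k * f k x) w = (\<Sum>k\<in>K. c k * qsym q (f k) w)"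
  unfolding qsym_eq_sum_permutes by (simp add: sum_distrib_left mult_ac) (rule sum.swap)

lemma nichols_zero_tmult_left: "nichols_zero q f \<Longrightarrow> nichols_zero q (tmult f g)"
  unfolding nichols_zero_def by (simp add: qsym_tmult fun_eq_iff)

lemma nichols_zero_tmult_right: "nichols_zero q g \<Longrightarrow> nichols_zero q (tmult f g)"
  unfolding nichols_zero_def by (simp add: qsym_tmult fun_eq_iff)

lemma mono_append: "mono (u @ v) = tmult (mono u) (mono v)"
proof
  fix w
  have "take k w = u \<and> drop k w = v \<longleftrightarrow> k = length u \<and> w = u @ v" if "k \<le> length w" for k
    using that append_take_drop_id[of k w] by (auto simp: min_absorb2)
  then have "tmult (mono u) (mono v) w = (\<Sum>k\<in>{0..length w}. if k = length u \<and> w = u @ v then 1 else 0)"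
    unfolding tmult_def mono_def by (intro sum.cong) auto
  then show "mono (u @ v) w = tmult (mono u) (mono v) w"
    unfolding mono_def by (cases "w = u @ v") simp_all
qed

text \<open>The \<open>\<int>\<^sup>n\<close>-degree of a word is recorded as its multiset of letters.\<close>
definition homogeneous :: "nat multiset \<Rightarrow> 'a::zero tensor \<Rightarrow> bool" where
  "homogeneous M f \<longleftrightarrow> (\<forall>w. f w \<noteq> 0 \<longrightarrow> mset w = M)"

lemma homogeneous_mono: "homogeneous (mset u) (mono u)"
  unfolding homogeneous_def mono_def by simp

lemma homogeneous_tmult:
  assumes "homogeneous M f" "homogeneous M' g"
  shows "homogeneous (M + M') (tmult f g)"
  unfolding homogeneous_def
proof (intro allI impI)
  fix w assume "tmult f g w \<noteq> 0"
  then obtain k where "f (take k w) * g (drop k w) \<noteq> 0"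
    unfolding tmult_def by (meson sum.not_neutral_contains_not_neutral)
  then show "mset w = M + M'"
    using assms unfolding homogeneous_def by (metis append_take_drop_id mset_append mult_eq_0_iff)
qed

lemma homogeneous_beval: "homogeneous (mset (letters t)) (beval q t)"
proof (induction t)
  case (Letter i)
  show ?case
    using homogeneous_mono[of "[i]"] by simp
next
  case (Br s t)
  then have "homogeneous (mset (letters (Br s t))) (tmult (beval q t) (beval q s))"
    and "homogeneous (mset (letters (Br s t))) (tmult (beval q s) (beval q t))"
    using homogeneous_tmult by (fastforce simp: add.commute)+
  then show ?case
    unfolding homogeneous_def beval.simps by (metis diff_zero mult_zero_right)
qed

lemma qsym_eq_0_if_homogeneous:
  assumes "homogeneous M f" "mset w \<noteq> M"
  shows "qsym q f w = 0"
  using assms unfolding homogeneous_def qsym_eq_sum_permutes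
  by (intro sum.neutral) (auto simp: mset_permute_list)

definition positions :: "nat list \<Rightarrow> nat set \<Rightarrow> nat set" where
  "positions w A = {i. i < length w \<and> w ! i \<in> A}"

theorem qsym_tmult_disjoint:
  assumes f: "homogeneous M f" and g: "homogeneous M' g"
    and disjoint: "set_mset M \<inter> set_mset M' = {}"
  shows "qsym q (tmult f g) w = crossing_coeff q w (positions w (set_mset M))
    * qsym q f (nths w (positions w (set_mset M)))
    * qsym q g (nths w ({..<length w} - positions w (set_mset M)))"
proof -
  define T where "T P = crossing_coeff q w P * qsym q f (nths w P) * qsym q g (nths w ({..<length w} - P))"
    for P
  have "T P = 0" if "P \<subseteq> {..<length w}" "P \<noteq> positions w (set_mset M)" for P
  proof (rule ccontr)
    assume "T P \<noteq> 0"
    then have "mset (nths w P) = M" "mset (nths w ({..<length w} - P)) = M'"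
      unfolding T_def using qsym_eq_0_if_homogeneous[OF f] qsym_eq_0_if_homogeneous[OF g] by auto
    then have M: "set_mset M = set (nths w P)" and M': "set_mset M' = set (nths w ({..<length w} - P))"
      by (metis set_mset_mset)+
    then have "w ! i \<in># M" if "i \<in> P" for i
      using that \<open>P \<subseteq> {..<length w}\<close> unfolding M by (auto simp: set_nths)
    moreover have "w ! i \<in># M'" if "i < length w" "i \<notin> P" for i
      using that unfolding M' by (auto simp: set_nths)
    ultimately have "P = positions w (set_mset M)"
      using disjoint \<open>P \<subseteq> {..<length w}\<close> unfolding positions_def by blast
    with \<open>P \<noteq> positions w (set_mset M)\<close> show False ..
  qed
  then have "sum T (Pow {..<length w}) = sum T {positions w (set_mset M)}"
    by (intro sum.mono_neutral_right) (auto simp: positions_def)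
  then show ?thesis
    unfolding qsym_tmult T_def by simp
qed

lemma qsym_mono_append:
  assumes disjoint: "set u \<inter> set v = {}" and "mset a = mset u" "mset b = mset v"
  shows "qsym q (mono (u @ v)) (a @ b) = qsym q (mono u) a * qsym q (mono v) b"
proof -
  have "set u = set a" "set v = set b"
    using assms(2,3) by (metis set_mset_mset)+
  have "(a @ b) ! i \<in> set u \<longleftrightarrow> i < length a" if "i < length (a @ b)" for i
  proof (cases "i < length a")
    case True
    then show ?thesis
      using \<open>set u = set a\<close> by (simp add: nth_append)
  next
    case False
    then have "(a @ b) ! i \<in> set v"
      using that \<open>set v = set b\<close> by (simp add: nth_append)
    then show ?thesis
      using False disjoint by auto
  qed
  then have "positions (a @ b) (set_mset (mset u)) = {..<length a}"
    by (auto simp: positions_def)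
  moreover have "crossing_coeff q (a @ b) {..<length a} = 1"
  proof -
    have "crossings (length (a @ b)) {..<length a} = {}"
      unfolding crossings_def by auto
    then show ?thesis
      unfolding crossing_coeff_def by simp
  qed
  ultimately show ?thesis
    using disjoint
    by (simp add: mono_append qsym_tmult_disjoint[OF homogeneous_mono homogeneous_mono]
        nths_append_suffix)
qed

lemma not_nichols_zero_mono_append_iff:
  assumes "set u \<inter> set v = {}"
  shows "\<not> nichols_zero q (mono (u @ v)) \<longleftrightarrow> \<not> nichols_zero q (mono u) \<and> \<not> nichols_zero q (mono v)"
proof
  assume "\<not> nichols_zero q (mono (u @ v))"
  then show "\<not> nichols_zero q (mono u) \<and> \<not> nichols_zero q (mono v)"
    using nichols_zero_tmult_left nichols_zero_tmult_right by (metis mono_append)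
next
  assume "\<not> nichols_zero q (mono u) \<and> \<not> nichols_zero q (mono v)"
  then obtain a b where a: "qsym q (mono u) a \<noteq> 0" and b: "qsym q (mono v) b \<noteq> 0"
    unfolding nichols_zero_def by (meson ext)
  then have "mset a = mset u" "mset b = mset v"
    using qsym_eq_0_if_homogeneous[OF homogeneous_mono] by blast+
  then have "qsym q (mono (u @ v)) (a @ b) \<noteq> 0"
    using a b assms by (simp add: qsym_mono_append)
  then show "\<not> nichols_zero q (mono (u @ v))"
    unfolding nichols_zero_def by (metis (mono_tags))
qed

section \<open>Brackets across commuting letter sets\<close>

lemma chi_eq_prod_mset: "chi q a b = (\<Prod>i\<in>#mset a. \<Prod>j\<in>#mset b. q i j)"
proof -
  have "chi q a b = prod_list (map (\<lambda>i. prod_list (map (q i) b)) a)"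
    unfolding chi_def by (induction a) simp_all
  then show ?thesis
    by (simp flip: prod_mset_prod_list)
qed

lemma chi_nths:
  assumes "P \<subseteq> {..<length w}" "R \<subseteq> {..<length w}"
  shows "chi q (nths w P) (nths w R) = (\<Prod>i\<in>P. \<Prod>j\<in>R. q (w ! i) (w ! j))"
  using assms
  by (simp add: chi_eq_prod_mset prod_mset_prod_list prod_list_map_nths flip: mset_map)

lemma crossing_coeff_complement:
  assumes "X \<inter> Y = {}" "X \<union> Y = {..<length w}"
    and symmetric: "\<And>i j. i \<in> Y \<Longrightarrow> j \<in> X \<Longrightarrow> q (w ! i) (w ! j) * q (w ! j) (w ! i) = 1"
  shows "crossing_coeff q w Y = (\<Prod>i\<in>Y. \<Prod>j\<in>X. q (w ! i) (w ! j)) * crossing_coeff q w X"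
proof -
  define h where "h = (\<lambda>(i, j). q (w ! i) (w ! j))"
  define B where "B = {(i, j) \<in> Y \<times> X. i < j}"
  have X: "j < length w \<and> j \<notin> Y \<longleftrightarrow> j \<in> X" and Y: "j < length w \<and> j \<notin> X \<longleftrightarrow> j \<in> Y" for j
    using assms(1,2) by blast+
  have "crossings (length w) Y = {(i, j) \<in> Y \<times> X. j < i}"
    unfolding crossings_def using X by blast
  then have "Y \<times> X = crossings (length w) Y \<union> B" "crossings (length w) Y \<inter> B = {}"
    unfolding B_def using assms(1) by auto
  moreover have "finite (Y \<times> X)"
    using assms(2) by (metis finite_Un finite_lessThan finite_cartesian_product)
  ultimately have "prod h (Y \<times> X) = crossing_coeff q w Y * prod h B"
    unfolding crossing_coeff_def h_def by (simp add: prod.union_disjoint)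
  moreover have "crossing_coeff q w X = prod (h \<circ> prod.swap) B"
  proof -
    have "crossings (length w) X = {(i, j) \<in> X \<times> Y. j < i}"
      unfolding crossings_def using Y by blast
    also have "\<dots> = prod.swap ` B"
      unfolding B_def by force
    finally show ?thesis
      unfolding crossing_coeff_def h_def by (simp add: prod.reindex)
  qed
  moreover have "prod h B * prod (h \<circ> prod.swap) B = 1"
    unfolding prod.distrib[symmetric] using symmetric
    by (intro prod.neutral) (auto simp: B_def h_def)
  ultimately have "prod h (Y \<times> X) * crossing_coeff q w X = crossing_coeff q w Y"
    by (metis mult.assoc mult_1_right)
  then show ?thesis
    unfolding h_def by (simp add: prod.cartesian_product)
qed

theorem qsym_tmult_swap:
  assumes f: "homogeneous (mset a) f" and g: "homogeneous (mset b) g"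
    and disjoint: "set a \<inter> set b = {}"
    and symmetric: "\<forall>i\<in>set a. \<forall>j\<in>set b. q i j * q j i = 1"
  shows "qsym q (tmult g f) w = chi q b a * qsym q (tmult f g) w"
proof (cases "mset w = mset a + mset b")
  case False
  then show ?thesis
    using qsym_eq_0_if_homogeneous homogeneous_tmult[OF f g] homogeneous_tmult[OF g f]
    by (metis add.commute mult_zero_right)
next
  case True
  define X where "X = positions w (set a)"
  define Y where "Y = positions w (set b)"
  have "set w = set a \<union> set b"
    using True by (metis set_mset_mset set_mset_union)
  then have "X \<union> Y = {..<length w}"
    unfolding X_def Y_def positions_def by (auto dest: nth_mem)
  moreover have "X \<inter> Y = {}"
    unfolding X_def Y_def positions_def using disjoint by auto
  ultimately have XY: "X \<subseteq> {..<length w}" "Y \<subseteq> {..<length w}"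
    and complement: "{..<length w} - X = Y" "{..<length w} - Y = X"
    by auto
  have g_f: "qsym q (tmult g f) w = crossing_coeff q w Y * qsym q g (nths w Y) * qsym q f (nths w X)"
    using qsym_tmult_disjoint[OF g f] disjoint complement unfolding X_def Y_def by (auto simp: Int_commute)
  have f_g: "qsym q (tmult f g) w = crossing_coeff q w X * qsym q f (nths w X) * qsym q g (nths w Y)"
    using qsym_tmult_disjoint[OF f g] disjoint complement unfolding X_def Y_def by auto
  show ?thesis
  proof (cases "qsym q g (nths w Y) = 0 \<or> qsym q f (nths w X) = 0")
    case True
    then show ?thesis
      using g_f f_g by auto
  next
    case False
    then have "mset (nths w Y) = mset b" "mset (nths w X) = mset a"
      using qsym_eq_0_if_homogeneous f g by blast+
    then have "chi q b a = (\<Prod>i\<in>Y. \<Prod>j\<in>X. q (w ! i) (w ! j))"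
      using chi_nths[OF XY(2,1)] by (simp add: chi_eq_prod_mset)
    moreover have "crossing_coeff q w Y = (\<Prod>i\<in>Y. \<Prod>j\<in>X. q (w ! i) (w ! j)) * crossing_coeff q w X"
      using \<open>X \<inter> Y = {}\<close> \<open>X \<union> Y = {..<length w}\<close>
    proof (rule crossing_coeff_complement)
      show "q (w ! i) (w ! j) * q (w ! j) (w ! i) = 1" if "i \<in> Y" "j \<in> X" for i j
        using that symmetric unfolding X_def Y_def positions_def by (metis mult.commute mem_Collect_eq)
    qed
    ultimately show ?thesis
      using g_f f_g by (simp add: mult_ac)
  qed
qed

lemma qsym_beval_Br:
  "qsym q (beval q (Br s t)) w = qsym q (tmult (beval q t) (beval q s)) w
    - chi q (letters t) (letters s) * qsym q (tmult (beval q s) (beval q t)) w"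
  by (simp only: beval.simps qsym_diff qsym_scale)

lemma nichols_zero_beval_Br:
  "nichols_zero q (beval q s) \<or> nichols_zero q (beval q t) \<Longrightarrow> nichols_zero q (beval q (Br s t))"
  using nichols_zero_tmult_left[of q _ "beval q _"] nichols_zero_tmult_right[of q _ "beval q _"]
  unfolding nichols_zero_def fun_eq_iff qsym_beval_Br by auto

lemma nichols_zero_beval_Br_if_commuting:
  assumes "set (letters s) \<inter> set (letters t) = {}"
    and "\<forall>i\<in>set (letters s). \<forall>j\<in>set (letters t). q i j * q j i = 1"
  shows "nichols_zero q (beval q (Br s t))"
  using qsym_tmult_swap[OF homogeneous_beval homogeneous_beval assms]
  unfolding nichols_zero_def fun_eq_iff qsym_beval_Br by simp

lemma nichols_zero_beval_if_mixed:
  assumes disjoint: "A \<inter> B = {}" and symmetric: "\<forall>i\<in>A. \<forall>j\<in>B. q i j * q j i = 1"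
  shows "set (letters t) \<subseteq> A \<union> B \<Longrightarrow> set (letters t) \<inter> A \<noteq> {} \<Longrightarrow> set (letters t) \<inter> B \<noteq> {}
    \<Longrightarrow> nichols_zero q (beval q t)"
proof (induction t)
  case (Letter i)
  then show ?case
    using disjoint by auto
next
  case (Br s t)
  consider "set (letters s) \<inter> A \<noteq> {}" "set (letters s) \<inter> B \<noteq> {}"
    | "set (letters t) \<inter> A \<noteq> {}" "set (letters t) \<inter> B \<noteq> {}"
    | "set (letters s) \<subseteq> A" "set (letters t) \<subseteq> B"
    | "set (letters s) \<subseteq> B" "set (letters t) \<subseteq> A"
    using Br.prems by auto
  then show ?case
  proof cases
    case 1
    then show ?thesis
      using Br.IH(1) Br.prems(1) by (intro nichols_zero_beval_Br disjI1) auto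
  next
    case 2
    then show ?thesis
      using Br.IH(2) Br.prems(1) by (intro nichols_zero_beval_Br disjI2) auto
  next
    case 3
    then show ?thesis
      using disjoint symmetric by (intro nichols_zero_beval_Br_if_commuting) blast+
  next
    case 4
    then show ?thesis
      using disjoint symmetric
      by (intro nichols_zero_beval_Br_if_commuting) (blast, metis mult.commute subsetD)
  qed
qed

lemma qsym_beval_eq_0_if_mixed:
  assumes "A \<inter> B = {}" "\<forall>i\<in>A. \<forall>j\<in>B. q i j * q j i = 1"
    and "set w \<subseteq> A \<union> B" "set w \<inter> A \<noteq> {}" "set w \<inter> B \<noteq> {}"
  shows "qsym q (beval q t) w = 0"
proof (cases "mset w = mset (letters t)")
  case True
  then have "set (letters t) = set w"
    by (metis set_mset_mset)
  then show ?thesis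
    using nichols_zero_beval_if_mixed[OF assms(1,2)] assms(3-5) unfolding nichols_zero_def by metis
next
  case False
  then show ?thesis
    using qsym_eq_0_if_homogeneous[OF homogeneous_beval] by blast
qed

lemma in_LV_mono_append_iff:
  assumes disjoint: "set u \<inter> set v = {}" and symmetric: "\<forall>i\<in>set u. \<forall>j\<in>set v. q i j * q j i = 1"
    and "u \<noteq> []" "v \<noteq> []"
  shows "in_LV n q (mono (u @ v)) \<longleftrightarrow> nichols_zero q (mono (u @ v))"
proof
  assume "in_LV n q (mono (u @ v))"
  then obtain ts cs where
    zero: "nichols_zero q (\<lambda>w. mono (u @ v) w - (\<Sum>k<length ts. cs ! k * beval q (ts ! k) w))"
    unfolding in_LV_def by blast
  have "qsym q (mono (u @ v)) w = 0" for w
  proof (cases "mset w = mset (u @ v)")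
    case True
    then have "set w = set u \<union> set v"
      by (metis set_append set_mset_mset)
    then have "qsym q (beval q t) w = 0" for t
      using qsym_beval_eq_0_if_mixed[OF disjoint symmetric] \<open>u \<noteq> []\<close> \<open>v \<noteq> []\<close> by auto
    then show ?thesis
      using zero unfolding nichols_zero_def
      by (simp add: fun_eq_iff qsym_diff qsym_sum)
  next
    case False
    then show ?thesis
      using qsym_eq_0_if_homogeneous[OF homogeneous_mono] by blast
  qed
  then show "nichols_zero q (mono (u @ v))"
    unfolding nichols_zero_def by auto
next
  assume "nichols_zero q (mono (u @ v))"
  then show "in_LV n q (mono (u @ v))"
    unfolding in_LV_def by (intro exI[of _ "[]"]) simp
qed

theorem corollary5p2:
  fixes q :: "nat \<Rightarrow> nat \<Rightarrow> 'a::field_char_0" and n :: nat and u v :: "nat list"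
  assumes "alg_closed_field TYPE('a)"
    and "\<forall>i<n. \<forall>j<n. q i j \<noteq> 0"
    and "u \<noteq> []" and "v \<noteq> []"
    and "set u \<subseteq> {..<n}" and "set v \<subseteq> {..<n}"
    and "set u \<inter> set v = {}"
    and "\<forall>i\<in>set u. \<forall>j\<in>set v. q i j * q j i = 1"
  shows "((\<not> nichols_zero q (mono u) \<and> \<not> nichols_zero q (mono v))
            \<longleftrightarrow> \<not> nichols_zero q (mono (u @ v)))
       \<and> (\<not> nichols_zero q (mono (u @ v)) \<longleftrightarrow> \<not> in_LV n q (mono (u @ v)))"
  using not_nichols_zero_mono_append_iff[OF assms(7)] in_LV_mono_append_iff[OF assms(7,8,3,4)]
  by blast

end
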